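(* For every integer $n\geq 1$, $$(2-t)\bigl(B_n(t)S_{n+1}(t)-S_n(t)B_{n+1}(t)\bigr)=t^{\lfloor\log_2 n\rfloor}\bigl(B_{n+1}(t)-B_n(t)-t+1\bigr).$$
   Context: The Stern polynomials $B_n(t)\in\mathbb{Z}[t]$ are defined by $B_0(t)=0$, $B_1(t)=1$, and for $n\geq 1$: $B_{2n}(t)=tB_n(t)$, $B_{2n+1}(t)=B_n(t)+B_{n+1}(t)$. The polynomials $S_n(t)$, $n\ge1$, are defined by $S_1(t)=S_2(t)=0$ and, for $k\geq 1$, $S_{2k}(t)=tS_k(t)$, $S_{2k+1}(t)=S_k(t)+S_{k+1}(t)+t^{\lfloor\log_2 k\rfloor}$ (so e.g. $S_3=1$, $S_5=1+t$, $S_9=1+t+t^2$). *)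

theory Defs
  imports "HOL-Computational_Algebra.Polynomial" "HOL-Library.Discrete_Functions"
begin

function stern_B :: "nat \<Rightarrow> int poly" where
  "stern_B n = (if n = 0 then 0 else if n = 1 then 1
               else if even n then [:0, 1:] * stern_B (n div 2)
               else stern_B (n div 2) + stern_B (n div 2 + 1))"
  by auto
termination by (relation "measure id") (auto elim!: oddE)

(* S_n(t), n >= 1: S_1 = S_2 = 0, S_{2k} = t S_k,
   S_{2k+1} = S_k + S_{k+1} + t^(floor(log_2 k)).
   S_0 is an unused dummy value 0.  floor_log k = floor(log_2 k) for k >= 1. *)
function stern_S :: "nat \<Rightarrow> int poly" where
  "stern_S n = (if n \<le> 2 then 0
               else if even n then [:0, 1:] * stern_S (n div 2)
               else stern_S (n div 2) + stern_S (n div 2 + 1)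
                    + [:0, 1:] ^ floor_log (n div 2))"
  by auto
termination by (relation "measure id") (auto elim!: oddE)

end

theory Submission
  imports Defs
begin

(* Write t = [:0,1:] and call the claimed equation the Stern
   identity at n.  Both B and S satisfy recurrences that express the values at
   2k and 2k+1 through the values at k and k+1, and floor_log (2k) and
   floor_log (2k+1) both equal floor_log k + 1.  Substituting these recurrences,
   the identity at 2k and at 2k+1 becomes, after multiplying out, t times the
   identity at k plus a term that cancels; this is a purely ring-theoretic fact
   which we state for arbitrary commutative rings. *)

declare stern_B.simps[simp del] stern_S.simps[simp del]

lemma stern_B_one: "stern_B 1 = 1"
  by (subst stern_B.simps) simp

lemma stern_B_two: "stern_B 2 = [:0, 1:]"
  by (subst stern_B.simps) (simp add: stern_B_one[simplified])

lemma stern_B_even: "k \<ge> 1 \<Longrightarrow> stern_B (2 * k) = [:0, 1:] * stern_B k"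
  by (subst stern_B.simps) auto

lemma stern_B_odd: "k \<ge> 1 \<Longrightarrow> stern_B (2 * k + 1) = stern_B k + stern_B (k + 1)"
  by (subst stern_B.simps) auto

lemma stern_S_one: "stern_S 1 = 0"
  by (subst stern_S.simps) simp

lemma stern_S_two: "stern_S 2 = 0"
  by (subst stern_S.simps) simp

text \<open>For k = 1 the even rule holds because S 1 = S 2 = 0.\<close>

lemma stern_S_even: "k \<ge> 1 \<Longrightarrow> stern_S (2 * k) = [:0, 1:] * stern_S k"
  by (cases "k = 1") (simp_all add: stern_S_one[simplified] stern_S_two stern_S.simps[of "2 * k"])

lemma stern_S_odd:
  "k \<ge> 1 \<Longrightarrow> stern_S (2 * k + 1) = stern_S k + stern_S (k + 1) + [:0, 1:] ^ floor_log k"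
  by (subst stern_S.simps) auto

lemma floor_log_double_Suc: "k \<ge> 1 \<Longrightarrow> floor_log (2 * k + 1) = Suc (floor_log k)"
  using floor_log_rec[of "2 * k + 1"] by simp

text \<open>Here Bk, Bk1, Sk, Sk1 stand for
  the values at k and k+1 and p for the power of t at k; the hypothesis is the
  identity at k, the conclusions are the identities at 2k and 2k+1 after the
  recurrences have been substituted.\<close>

lemma identity_step_even:
  fixes t Bk Bk1 Sk Sk1 p :: "'a::comm_ring_1"
  assumes "(2 - t) * (Bk * Sk1 - Sk * Bk1) = p * (Bk1 - Bk - t + 1)"
  shows "(2 - t) * ((t * Bk) * (Sk + Sk1 + p) - (t * Sk) * (Bk + Bk1))
       = (t * p) * ((Bk + Bk1) - t * Bk - t + 1)"
proof -
  have "(2 - t) * ((t * Bk) * (Sk + Sk1 + p) - (t * Sk) * (Bk + Bk1))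
      = t * ((2 - t) * (Bk * Sk1 - Sk * Bk1)) + (2 - t) * t * p * Bk"
    by (simp add: algebra_simps)
  also have "\<dots> = t * (p * (Bk1 - Bk - t + 1)) + (2 - t) * t * p * Bk"
    using assms by simp
  also have "\<dots> = (t * p) * ((Bk + Bk1) - t * Bk - t + 1)"
    by (simp add: algebra_simps)
  finally show ?thesis .
qed

lemma identity_step_odd:
  fixes t Bk Bk1 Sk Sk1 p :: "'a::comm_ring_1"
  assumes "(2 - t) * (Bk * Sk1 - Sk * Bk1) = p * (Bk1 - Bk - t + 1)"
  shows "(2 - t) * ((Bk + Bk1) * (t * Sk1) - (Sk + Sk1 + p) * (t * Bk1))
       = (t * p) * (t * Bk1 - (Bk + Bk1) - t + 1)"
proof -
  have "(2 - t) * ((Bk + Bk1) * (t * Sk1) - (Sk + Sk1 + p) * (t * Bk1))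
      = t * ((2 - t) * (Bk * Sk1 - Sk * Bk1)) - (2 - t) * t * p * Bk1"
    by (simp add: algebra_simps)
  also have "\<dots> = t * (p * (Bk1 - Bk - t + 1)) - (2 - t) * t * p * Bk1"
    using assms by simp
  also have "\<dots> = (t * p) * (t * Bk1 - (Bk + Bk1) - t + 1)"
    by (simp add: algebra_simps)
  finally show ?thesis .
qed

text \<open>The Stern identity at n, with the factor 2 - t written as a difference so
  that the ring identities above apply literally.\<close>

definition stern_identity :: "nat \<Rightarrow> bool" where
  "stern_identity n \<longleftrightarrow>
     (2 - [:0, 1:]) * (stern_B n * stern_S (n + 1) - stern_S n * stern_B (n + 1))
       = [:0, 1:] ^ floor_log n * (stern_B (n + 1) - stern_B n - [:0, 1:] + 1)"

lemma two_minus_X: "[:2, -1:] = (2 - [:0, 1:] :: int poly)"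
  by (simp add: numeral_poly)

lemma stern_identity_one: "stern_identity 1"
  using stern_B_two stern_S_two
  by (simp add: stern_identity_def stern_B_one[simplified] stern_S_one[simplified]
      numeral_2_eq_2)

lemma stern_identity_double:
  assumes k: "k \<ge> 1" and id_k: "stern_identity k"
  shows "stern_identity (2 * k)" and "stern_identity (2 * k + 1)"
proof -
  note IH = id_k[unfolded stern_identity_def]
  have succ: "k + 1 \<ge> 1" and double_succ: "2 * k + 1 + 1 = 2 * (k + 1)"
    and log_double: "floor_log (2 * k) = Suc (floor_log k)"
    using k by simp_all
  show "stern_identity (2 * k)"
    unfolding stern_identity_def log_double power_Suc
      stern_B_even[OF k] stern_S_even[OF k] stern_B_odd[OF k] stern_S_odd[OF k]
    by (rule identity_step_even[OF IH])
  show "stern_identity (2 * k + 1)"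
    unfolding stern_identity_def floor_log_double_Suc[OF k] double_succ power_Suc
      stern_B_even[OF succ] stern_S_even[OF succ] stern_B_odd[OF k] stern_S_odd[OF k]
    by (rule identity_step_odd[OF IH])
qed

theorem mainTheorem13:
  fixes n :: nat
  assumes "n \<ge> 1"
  shows "[:2, -1:] * (stern_B n * stern_S (n + 1) - stern_S n * stern_B (n + 1))
         = [:0, 1:] ^ floor_log n * (stern_B (n + 1) - stern_B n - [:0, 1:] + 1)"
proof -
  from assms have "n > 0" by simp
  then have "stern_identity n"
  proof (induction n rule: floor_log_induct)
    case one
    show ?case by (rule stern_identity_one)
  next
    case (double n)
    then have half: "n div 2 \<ge> 1" by simp
    have "n = 2 * (n div 2) \<or> n = 2 * (n div 2) + 1" by presburger
    then show ?case
      using stern_identity_double[OF half double.IH] by metis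
  qed
  then show ?thesis
    unfolding stern_identity_def two_minus_X .
qed

end
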